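(* Let $(N,v)$ be a TU game and $\delta>0$. Following the Coalition Proposal algorithm (described in the context) for $(N,v)$, if the environment state at some iteration lies in $\Omega(v)$, then the environment state at every subsequent iteration lies in $\Omega(v)$.
   Context: A TU game is a pair $(N,v)$ with $N=\{1,\dots,n\}$ and $v:2^N\to\mathbb{R}$, $v(\emptyset)=0$. Coalition Proposal algorithm with step $\delta$: each player $i$ holds an aspiration $a_i$ and a coalition state $C_i\subseteq N$. In each iteration: a player $i\in N$ is activated at random; $i$ chooses at random a set $S\subseteq N\setminus\{i\}$ and proposes $J=S\cup\{i\}$. If $\sum_{j\in J}a_j+\delta\le v(J)$ (success): $a_i\leftarrow a_i+\delta$; then for every $j\in J$ and every $k\in C_j$ with $k\neq j$, set $C_k\leftarrow\emptyset$; then set $C_j\leftarrow J$ for all $j\in J$. Otherwise (failure): if $C_i=\emptyset$, set $a_i\leftarrow\max(v(\{i\}),a_i-\delta)$. Finally, if $a_i=v(\{i\})$ and $C_i=\emptyset$, set $C_i\leftarrow\{i\}$. The environment state is $(\mathbf{a},\mathcal{C})$ with $\mathbf{a}=(a_1,\dots,a_n)$ and $\mathcal{C}=\{C_i:i\in N\}$ the set of (nonempty) formed coalitions. A feasible environment state is a pair $(\mathbf{a},\mathcal{C})$ with $\mathbf{a}\in\mathbb{R}^n$ and $\mathcal{C}$ a set of pairwise disjoint subsets of $N$ such that $a_i\ge v(\{i\})$ for all $i\in N$ and $\sum_{i\in S}a_i\le v(S)$ for all $S\in\mathcal{C}$. $\Omega(v)$ is the set of feasible environment states. *)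

theory Defs
  imports Complex_Main
begin

text \<open>Players are N = {1..n}. A TU game is v :: nat set => real with v {} = 0
  (only values on subsets of N matter).
  An algorithm state is a pair (a, C): aspirations a i and coalition states C i.\<close>

type_synonym cp_state = "(nat \<Rightarrow> real) \<times> (nat \<Rightarrow> nat set)"

definition players :: "nat \<Rightarrow> nat set" where
  "players n = {1..n}"

definition cp_finalize :: "(nat set \<Rightarrow> real) \<Rightarrow> nat \<Rightarrow> cp_state \<Rightarrow> cp_state" where
  "cp_finalize v i s =
     (case s of (a, C) \<Rightarrow>
        (a, if a i = v {i} \<and> C i = {} then C(i := {i}) else C))"

text \<open>One iteration in which player i is activated and proposes J = S \<union> {i}.
  The resets C_k := {} use the coalition states before the update.\<close>
definition cp_update ::
  "(nat set \<Rightarrow> real) \<Rightarrow> real \<Rightarrow> nat \<Rightarrow> nat set \<Rightarrow> cp_state \<Rightarrow> cp_state" where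
  "cp_update v \<delta> i S s =
     (case s of (a, C) \<Rightarrow>
        (let J = insert i S in
         if (\<Sum>j\<in>J. a j) + \<delta> \<le> v J then
           (let a' = a(i := a i + \<delta>);
                C1 = (\<lambda>k. if (\<exists>j\<in>J. k \<in> C j \<and> k \<noteq> j) then {} else C k);
                C2 = (\<lambda>k. if k \<in> J then J else C1 k)
            in cp_finalize v i (a', C2))
         else
           (let a' = (if C i = {} then a(i := max (v {i}) (a i - \<delta>)) else a)
            in cp_finalize v i (a', C))))"

text \<open>One iteration of the Coalition Proposal algorithm (random choices = nondeterminism).\<close>
definition cp_step :: "nat \<Rightarrow> (nat set \<Rightarrow> real) \<Rightarrow> real \<Rightarrow> cp_state \<Rightarrow> cp_state \<Rightarrow> bool" where
  "cp_step n v \<delta> s s' \<longleftrightarrow>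
     (\<exists>i\<in>players n. \<exists>S. S \<subseteq> players n - {i} \<and> s' = cp_update v \<delta> i S s)"

definition formed_coalitions :: "nat \<Rightarrow> cp_state \<Rightarrow> nat set set" where
  "formed_coalitions n s = {snd s i | i. i \<in> players n \<and> snd s i \<noteq> {}}"

definition Omega :: "nat \<Rightarrow> (nat set \<Rightarrow> real) \<Rightarrow> cp_state set" where
  "Omega n v = {s. (\<forall>i\<in>players n. fst s i \<ge> v {i})
                 \<and> (\<forall>S\<in>formed_coalitions n s. S \<subseteq> players n)
                 \<and> pairwise disjnt (formed_coalitions n s)
                 \<and> (\<forall>S\<in>formed_coalitions n s. (\<Sum>j\<in>S. fst s j) \<le> v S)}"

definition cp_consistent :: "nat \<Rightarrow> cp_state \<Rightarrow> bool" where
  "cp_consistent n s \<longleftrightarrow>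
     (\<forall>i\<in>players n. snd s i = {} \<or>
        (i \<in> snd s i \<and> snd s i \<subseteq> players n \<and> (\<forall>k\<in>snd s i. snd s k = snd s i)))"

end

theory Submission
  imports Defs
begin

text \<open>Along every run from a consistent start, each nonempty coalition state C_i contains i and
  is the common coalition state of all its members, so the formed coalitions are automatically
  disjoint subsets of N, and feasibility reduces to individual rationality together with
  \<open>\<Sum>\<^sub>j\<^sub>\<in>\<^sub>S a_j \<le> v(S)\<close> for formed coalitions S. A successful proposal J raises a_i
  by \<delta> only inside J, which was admitted precisely because it can afford the raise, and every
  other surviving coalition is disjoint from J. A failed proposal lowers a_i only when i belongs to
  no coalition, never below v({i}), which is exactly the budget of the singleton {i} that may be
  formed afterwards.\<close>

definition coalition_structure :: "nat set \<Rightarrow> (nat \<Rightarrow> nat set) \<Rightarrow> bool" where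
  "coalition_structure N C \<longleftrightarrow>
     (\<forall>i\<in>N. C i = {} \<or> (i \<in> C i \<and> C i \<subseteq> N \<and> (\<forall>k\<in>C i. C k = C i)))"

definition form_coalition :: "nat set \<Rightarrow> (nat \<Rightarrow> nat set) \<Rightarrow> nat \<Rightarrow> nat set" where
  "form_coalition J C =
     (\<lambda>k. if k \<in> J then J else if \<exists>j\<in>J. k \<in> C j \<and> k \<noteq> j then {} else C k)"

lemma sum_fun_upd_notin: "i \<notin> A \<Longrightarrow> sum (a(i := x)) A = sum a A"
  by (rule sum.cong) auto

lemma sum_fun_upd_add:
  fixes a :: "'a \<Rightarrow> 'b::ab_group_add"
  assumes "finite A" "i \<in> A"
  shows "sum (a(i := a i + d)) A = sum a A + d"
  using assms by (simp add: sum.remove sum_fun_upd_notin algebra_simps)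

lemma cp_consistent_iff_coalition_structure:
  "cp_consistent n s \<longleftrightarrow> coalition_structure (players n) (snd s)"
  by (simp add: cp_consistent_def coalition_structure_def)

lemma coalition_structure_member:
  assumes "coalition_structure N C" "k \<in> N" "j \<in> C k"
  shows "C j = C k"
  using assms unfolding coalition_structure_def by blast

lemma coalition_structure_self_mem:
  assumes "coalition_structure N C" "k \<in> N" "C k \<noteq> {}"
  shows "k \<in> C k" "C k \<subseteq> N"
  using assms unfolding coalition_structure_def by blast+

lemma coalition_structure_unattached:
  assumes "coalition_structure N C" "k \<in> N" "C i = {}"
  shows "i \<notin> C k"
  using coalition_structure_member[OF assms(1,2)] assms(3) by force

lemma coalition_structure_disjoint:
  assumes "coalition_structure N C"
  shows "pairwise disjnt {C i | i. i \<in> N \<and> C i \<noteq> {}}"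
  unfolding pairwise_def disjnt_def
  using coalition_structure_member[OF assms] by (smt (verit) disjoint_iff mem_Collect_eq)

lemma Omega_iff_coalition_structure:
  assumes "coalition_structure (players n) C"
  shows "(a, C) \<in> Omega n v \<longleftrightarrow> (\<forall>i\<in>players n. v {i} \<le> a i) \<and>
           (\<forall>k\<in>players n. C k \<noteq> {} \<longrightarrow> sum a (C k) \<le> v (C k))"
proof -
  have "formed_coalitions n (a, C) = {C i | i. i \<in> players n \<and> C i \<noteq> {}}"
    by (simp add: formed_coalitions_def)
  moreover have "\<forall>S\<in>{C i | i. i \<in> players n \<and> C i \<noteq> {}}. S \<subseteq> players n"
    using coalition_structure_self_mem[OF assms] by auto
  ultimately show ?thesis
    using coalition_structure_disjoint[OF assms] unfolding Omega_def by (simp, blast)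
qed

lemma form_coalition_outside:
  assumes cs: "coalition_structure N C" and "J \<subseteq> N" "k \<in> N" "k \<notin> J"
    and "form_coalition J C k \<noteq> {}"
  shows "k \<in> C k" "C k \<inter> J = {}" "\<forall>m\<in>C k. form_coalition J C m = C k"
proof -
  have unreset: "\<not> (\<exists>j\<in>J. k \<in> C j \<and> k \<noteq> j)" and "C k \<noteq> {}"
    using assms(4,5) unfolding form_coalition_def by (auto split: if_splits)
  then show "k \<in> C k"
    using coalition_structure_self_mem[OF cs \<open>k \<in> N\<close>] by blast
  have "j \<notin> J" if "j \<in> C k" for j
  proof
    assume "j \<in> J"
    moreover have "k \<in> C j"
      using coalition_structure_member[OF cs \<open>k \<in> N\<close> that] \<open>k \<in> C k\<close> by simp
    ultimately show False
      using unreset \<open>k \<notin> J\<close> by blast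
  qed
  then show disj: "C k \<inter> J = {}" by blast
  show "\<forall>m\<in>C k. form_coalition J C m = C k"
  proof
    fix m assume m: "m \<in> C k"
    have "\<not> (\<exists>j\<in>J. m \<in> C j \<and> m \<noteq> j)"
    proof
      assume "\<exists>j\<in>J. m \<in> C j \<and> m \<noteq> j"
      then obtain j where "j \<in> J" "m \<in> C j" by blast
      then have "C j = C k"
        using coalition_structure_member[OF cs] m \<open>k \<in> N\<close> \<open>J \<subseteq> N\<close> by (metis subsetD)
      then show False
        using unreset \<open>j \<in> J\<close> \<open>k \<in> C k\<close> \<open>k \<notin> J\<close> by auto
    qed
    moreover have "m \<notin> J"
      using disj m by blast
    ultimately show "form_coalition J C m = C k"
      using coalition_structure_member[OF cs \<open>k \<in> N\<close> m] by (simp add: form_coalition_def, blast)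
  qed
qed

lemma coalition_structure_form_coalition:
  assumes cs: "coalition_structure N C" and "J \<subseteq> N"
  shows "coalition_structure N (form_coalition J C)"
  unfolding coalition_structure_def
proof
  fix k assume "k \<in> N"
  let ?C' = "form_coalition J C"
  consider "k \<in> J" | "?C' k = {}" | "k \<notin> J" "?C' k \<noteq> {}" by blast
  then show "?C' k = {} \<or> (k \<in> ?C' k \<and> ?C' k \<subseteq> N \<and> (\<forall>m\<in>?C' k. ?C' m = ?C' k))"
  proof cases
    case 1
    then show ?thesis
      using \<open>J \<subseteq> N\<close> by (simp add: form_coalition_def)
  next
    case 2
    then show ?thesis by blast
  next
    case 3
    note outside = form_coalition_outside[OF cs \<open>J \<subseteq> N\<close> \<open>k \<in> N\<close> 3]
    then have "?C' k = C k" by blast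
    moreover have "C k \<subseteq> N"
      using coalition_structure_self_mem(2)[OF cs \<open>k \<in> N\<close>] outside(1) by blast
    ultimately show ?thesis
      using outside by simp
  qed
qed

lemma coalition_structure_singleton:
  assumes cs: "coalition_structure N C" and "i \<in> N" "C i = {}"
  shows "coalition_structure N (C(i := {i}))"
  unfolding coalition_structure_def
proof
  fix k assume "k \<in> N"
  have i_unattached: "i \<notin> C k"
    using coalition_structure_unattached[OF cs \<open>k \<in> N\<close> \<open>C i = {}\<close>] .
  show "(C(i := {i})) k = {} \<or> (k \<in> (C(i := {i})) k \<and> (C(i := {i})) k \<subseteq> N \<and>
          (\<forall>m\<in>(C(i := {i})) k. (C(i := {i})) m = (C(i := {i})) k))"
  proof (cases "k = i")
    case True
    then show ?thesis
      using \<open>i \<in> N\<close> by simp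
  next
    case False
    have "C k = {} \<or> (k \<in> C k \<and> C k \<subseteq> N \<and> (\<forall>m\<in>C k. C m = C k))"
      using cs \<open>k \<in> N\<close> unfolding coalition_structure_def by blast
    moreover have "(C(i := {i})) m = C m" if "m \<in> C k" for m
      using i_unattached that by auto
    ultimately show ?thesis
      using False by auto
  qed
qed

lemma cp_update_success:
  assumes "sum a (insert i S) + \<delta> \<le> v (insert i S)"
  shows "cp_update v \<delta> i S (a, C) = (a(i := a i + \<delta>), form_coalition (insert i S) C)"
proof -
  have "form_coalition (insert i S) C i \<noteq> {}"
    by (simp add: form_coalition_def)
  then show ?thesis
    using assms unfolding cp_update_def Let_def prod.case form_coalition_def[symmetric]
    by (simp add: cp_finalize_def)
qed

lemma cp_update_failure:
  assumes "\<not> sum a (insert i S) + \<delta> \<le> v (insert i S)"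
  shows "cp_update v \<delta> i S (a, C) =
           cp_finalize v i (if C i = {} then a(i := max (v {i}) (a i - \<delta>)) else a, C)"
  using assms by (simp add: cp_update_def Let_def)

lemma cp_finalize_consistent:
  assumes "cp_consistent n s" "i \<in> players n"
  shows "cp_consistent n (cp_finalize v i s)"
  using assms coalition_structure_singleton
  by (auto simp: cp_finalize_def cp_consistent_iff_coalition_structure split: prod.split)

lemma cp_update_consistent:
  assumes "cp_consistent n s" "i \<in> players n" "S \<subseteq> players n"
  shows "cp_consistent n (cp_update v \<delta> i S s)"
proof -
  obtain a C where s: "s = (a, C)" by fastforce
  show ?thesis
  proof (cases "sum a (insert i S) + \<delta> \<le> v (insert i S)")
    case True
    then show ?thesis
      using assms coalition_structure_form_coalition
      by (simp add: s cp_update_success cp_consistent_iff_coalition_structure)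
  next
    case False
    then show ?thesis
      using assms cp_finalize_consistent
      by (simp add: s cp_update_failure cp_consistent_iff_coalition_structure)
  qed
qed

lemma Omega_form_coalition:
  assumes cs: "coalition_structure (players n) C" and om: "(a, C) \<in> Omega n v"
    and "0 \<le> \<delta>" "i \<in> J" "J \<subseteq> players n" "sum a J + \<delta> \<le> v J"
  shows "(a(i := a i + \<delta>), form_coalition J C) \<in> Omega n v"
proof -
  let ?a' = "a(i := a i + \<delta>)" and ?C' = "form_coalition J C"
  have ind: "\<forall>j\<in>players n. v {j} \<le> a j"
    and coal: "\<forall>k\<in>players n. C k \<noteq> {} \<longrightarrow> sum a (C k) \<le> v (C k)"
    using om Omega_iff_coalition_structure[OF cs] by blast+
  have "sum ?a' (?C' k) \<le> v (?C' k)" if "k \<in> players n" "?C' k \<noteq> {}" for k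
  proof (cases "k \<in> J")
    case True
    have "finite J"
      using \<open>J \<subseteq> players n\<close> by (simp add: players_def finite_subset)
    then have "sum ?a' J = sum a J + \<delta>"
      using \<open>i \<in> J\<close> by (rule sum_fun_upd_add)
    moreover have "?C' k = J"
      using True by (simp add: form_coalition_def)
    ultimately show ?thesis
      using \<open>sum a J + \<delta> \<le> v J\<close> by simp
  next
    case False
    note outside = form_coalition_outside[OF cs \<open>J \<subseteq> players n\<close> that(1) False that(2)]
    have "?C' k = C k"
      using outside(1,3) by blast
    moreover have "sum ?a' (C k) = sum a (C k)"
      using outside(2) \<open>i \<in> J\<close> by (intro sum_fun_upd_notin) blast
    moreover have "sum a (C k) \<le> v (C k)"
      using coal that(1) outside(1) by blast
    ultimately show ?thesis
      by simp
  qed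
  moreover have "\<forall>j\<in>players n. v {j} \<le> ?a' j"
    using ind \<open>0 \<le> \<delta>\<close> by auto
  moreover note coalition_structure_form_coalition[OF cs \<open>J \<subseteq> players n\<close>]
  ultimately show ?thesis
    using Omega_iff_coalition_structure by blast
qed

lemma Omega_fun_upd_unattached:
  assumes cs: "coalition_structure (players n) C" and om: "(a, C) \<in> Omega n v"
    and "C i = {}" "v {i} \<le> x"
  shows "(a(i := x), C) \<in> Omega n v"
proof -
  have "sum (a(i := x)) (C k) = sum a (C k)" if "k \<in> players n" for k
    using coalition_structure_unattached[OF cs that \<open>C i = {}\<close>] by (rule sum_fun_upd_notin)
  then show ?thesis
    using om \<open>v {i} \<le> x\<close> unfolding Omega_iff_coalition_structure[OF cs] by simp
qed

lemma cp_finalize_Omega: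
  assumes "cp_consistent n s" "s \<in> Omega n v" "i \<in> players n"
  shows "cp_finalize v i s \<in> Omega n v"
proof -
  obtain a C where s: "s = (a, C)" by fastforce
  have cs: "coalition_structure (players n) C"
    using assms(1) by (simp add: s cp_consistent_iff_coalition_structure)
  show ?thesis
  proof (cases "a i = v {i} \<and> C i = {}")
    case True
    have cs': "coalition_structure (players n) (C(i := {i}))"
      using coalition_structure_singleton[OF cs \<open>i \<in> players n\<close>] True by blast
    have "sum a ((C(i := {i})) k) \<le> v ((C(i := {i})) k)"
      if "k \<in> players n" "(C(i := {i})) k \<noteq> {}" for k
      using assms(2) that True unfolding s Omega_iff_coalition_structure[OF cs]
      by (cases "k = i") auto
    then have "(a, C(i := {i})) \<in> Omega n v"
      using assms(2) unfolding s Omega_iff_coalition_structure[OF cs']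
      Omega_iff_coalition_structure[OF cs] by simp
    then show ?thesis
      using True by (simp add: s cp_finalize_def)
  next
    case False
    then show ?thesis
      using assms(2) by (auto simp: s cp_finalize_def)
  qed
qed

lemma cp_update_Omega:
  assumes "cp_consistent n s" "s \<in> Omega n v" "0 \<le> \<delta>" "i \<in> players n" "S \<subseteq> players n"
  shows "cp_update v \<delta> i S s \<in> Omega n v"
proof -
  obtain a C where s: "s = (a, C)" by fastforce
  have cs: "coalition_structure (players n) C"
    using assms(1) by (simp add: s cp_consistent_iff_coalition_structure)
  show ?thesis
  proof (cases "sum a (insert i S) + \<delta> \<le> v (insert i S)")
    case True
    then show ?thesis
      using Omega_form_coalition[OF cs] assms by (simp add: s cp_update_success)
  next
    case False
    let ?a' = "if C i = {} then a(i := max (v {i}) (a i - \<delta>)) else a"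
    have "(?a', C) \<in> Omega n v"
      using Omega_fun_upd_unattached[OF cs] assms(2) by (simp add: s)
    moreover have "cp_consistent n (?a', C)"
      using assms(1) by (simp add: s cp_consistent_def)
    ultimately show ?thesis
      using cp_finalize_Omega assms(4) False by (simp add: s cp_update_failure)
  qed
qed

lemma cp_step_preserves:
  assumes "cp_step n v \<delta> s t" "cp_consistent n s"
  shows "cp_consistent n t" and "s \<in> Omega n v \<Longrightarrow> 0 \<le> \<delta> \<Longrightarrow> t \<in> Omega n v"
proof -
  obtain i S where "i \<in> players n" "S \<subseteq> players n" "t = cp_update v \<delta> i S s"
    using assms(1) unfolding cp_step_def by blast
  then show "cp_consistent n t" and "s \<in> Omega n v \<Longrightarrow> 0 \<le> \<delta> \<Longrightarrow> t \<in> Omega n v"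
    using assms(2) cp_update_consistent cp_update_Omega by simp_all
qed

lemma cp_steps_consistent:
  assumes "(cp_step n v \<delta>)\<^sup>*\<^sup>* s t" "cp_consistent n s"
  shows "cp_consistent n t"
  using assms(1)
proof (induction rule: rtranclp_induct)
  case base
  show ?case using assms(2) .
next
  case (step t u)
  then show ?case using cp_step_preserves(1) by blast
qed

lemma cp_steps_Omega:
  assumes "(cp_step n v \<delta>)\<^sup>*\<^sup>* s t" "cp_consistent n s" "s \<in> Omega n v" "0 \<le> \<delta>"
  shows "t \<in> Omega n v"
  using assms(1)
proof (induction rule: rtranclp_induct)
  case base
  show ?case using assms(3) .
next
  case (step t u)
  have "cp_consistent n t"
    using step.hyps(1) assms(2) by (rule cp_steps_consistent)
  then show ?case
    using cp_step_preserves(2) step.hyps(2) step.IH assms(4) by blast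
qed

theorem proposition3:
  fixes n :: nat and v :: "nat set \<Rightarrow> real" and \<delta> :: real
    and s0 s s' :: cp_state
  assumes "v {} = 0"
    and "\<delta> > 0"
    and "cp_consistent n s0"
    and "(cp_step n v \<delta>)\<^sup>*\<^sup>* s0 s"
    and "s \<in> Omega n v"
    and "(cp_step n v \<delta>)\<^sup>*\<^sup>* s s'"
  shows "s' \<in> Omega n v"
proof -
  have "cp_consistent n s"
    using assms(4,3) by (rule cp_steps_consistent)
  then show ?thesis
    using assms(6,5) \<open>\<delta> > 0\<close> by (simp add: cp_steps_Omega)
qed

end
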